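(* Let $\mathbf{F}_q$ have characteristic $p$, let $c\ge3$, and let $a_1=0,a_2=1,a_3,\dots,a_c$ be distinct elements of $\mathbf{F}_q$; put $D=\mathbf{F}_q\setminus\{a_1,\dots,a_c\}$. Then for every integer $1\le k\le q-c$ and every $b\in\mathbf{F}_q$, $$N(k,b,D)-\frac1q\binom{q-c}{k}=\frac1q(-1)^kR^c_k-(-1)^k\sum_{i_1=0}^{k}\sum_{i_2=0}^{k-i_1}\cdots\sum_{i_{c-2}=0}^{k-i_1-\cdots-i_{c-3}}S\Big(k-\sum_{j=1}^{c-2}i_j,\ k-\sum_{j=1}^{c-2}i_j-b+\sum_{j=1}^{c-2}i_ja_{c+1-j}\Big),$$ where the second argument of $S$ is computed in $\mathbf{F}_q$ (integers mapped into $\mathbf{F}_p$). Moreover, if $b,a_2,\dots,a_c$ are linearly independent over $\mathbf{F}_p$, then $$N(k,b,D)=\frac1q\binom{q-c}{k}+\frac1q(-1)^kR^c_k.$$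
   Context: $N(k,b,D)$ denotes the number of $k$-element subsets $\{x_1,\dots,x_k\}\subseteq D$ with $x_1+\dots+x_k=b$. Binomial coefficients $\binom{x}{m}=x(x-1)\cdots(x-m+1)/m!$ for real $x$, integer $m\ge0$. $R^1_j=-(-1)^{\lfloor j/p\rfloor}\binom{q/p-1}{\lfloor j/p\rfloor}$ for integers $j\ge0$, and $R^c_k=\sum_{j=0}^kR^{c-1}_j$ for $c\ge2$. For an integer $k\ge0$ and $e\in\mathbf{F}_q$: if $e\in\mathbf{F}_p$, $S(k,e)=\sum_{0\le i\le k,\ i\equiv e\ (\mathrm{mod}\ p)}R^1_i$ (sum over integers $i$ whose image in $\mathbf{F}_p$ is $e$); if $e\notin\mathbf{F}_p$, $S(k,e)=0$. *)

theory Defs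
  imports Complex_Main "HOL-Library.Cardinality"
begin

definition Nsub :: "nat \<Rightarrow> 'a::comm_monoid_add \<Rightarrow> 'a set \<Rightarrow> nat" where
  "Nsub k b D = card {X. X \<subseteq> D \<and> finite X \<and> card X = k \<and> (\<Sum>x\<in>X. x) = b}"

definition R1 :: "nat \<Rightarrow> nat \<Rightarrow> nat \<Rightarrow> real" where
  "R1 p q j = - ((-1) ^ (j div p) * ((real q / real p - 1) gchoose (j div p)))"

text \<open>R^c_k for c \<ge> 1 (the value for c = 0 is an irrelevant default).\<close>
fun Rc :: "nat \<Rightarrow> nat \<Rightarrow> nat \<Rightarrow> nat \<Rightarrow> real" where
  "Rc p q 0 k = 0"
| "Rc p q (Suc 0) k = R1 p q k"
| "Rc p q (Suc (Suc c)) k = (\<Sum>j\<le>k. Rc p q (Suc c) j)"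

text \<open>S(k,e): e lies in the prime field F_p iff it is of the form of_nat n;
  integer i has image e in F_p iff of_nat i = e.\<close>
definition Sfun :: "nat \<Rightarrow> nat \<Rightarrow> nat \<Rightarrow> 'a::field \<Rightarrow> real" where
  "Sfun p q k e = (if e \<in> range (of_nat :: nat \<Rightarrow> 'a)
      then (\<Sum>i\<in>{i. i \<le> k \<and> (of_nat i :: 'a) = e}. R1 p q i) else 0)"

end

theory Submission
  imports Defs
begin

(*
  Double counting the pairs (x, X) with x in X, together
      with inclusion-exclusion on the point x, gives a recursion for N(m,beta,F_q)
      in m.  The deviation q N(m,beta,F_q) - binom(q,m) satisfies a homogeneous
      recursion, which the coefficients E(m) of (1 - z^p)^(q/p) also satisfy; hence
      N(m,beta,F_q) = binom(q,m)/q + (-1)^m E(m) ([beta = 0] - 1/q).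
  (2) Removing points.  Removing a point y costs an alternating sum,
      N(k,b,D - {y}) = sum_t (-1)^t N(k - t, b - t y, D).  Removing 0 and then 1
      from the field produces R^1, R^2 and the correction term S.
  (3) Removing a finite family alpha j (j in J) of further points yields a sum
      over exponent tuples supported on J; the binomial and R-parts sum up to
      binom(q - |J| - 2, k) and R^(|J|+2)_k.  The theorem is the case
      J = {1..c-2}, alpha j = a (c + 1 - j); under linear independence no argument
      of S lies in F_p, so all S-terms vanish.
*)

lemma neg_one_power_split: "s \<le> k \<Longrightarrow> (-1::real) ^ s * (-1) ^ (k - s) = (-1) ^ k"
  by (simp add: power_add[symmetric])

lemma sum_reverse: "(\<Sum>t\<le>(n::nat). f (n - t)) = (\<Sum>t\<le>n. f t)"
  by (rule sum.reindex_bij_witness[where i="\<lambda>i. n - i" and j="\<lambda>i. n - i"]) auto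

(* Alternating partial sums of binomial coefficients: the coefficient identity
   (1 + z)^x / (1 + z) = (1 + z)^(x - 1). *)
lemma alternating_gchoose_sum: "(\<Sum>t\<le>n. (-1)^t * ((x::real) gchoose (n - t))) = (x - 1) gchoose n"
proof (induction n)
  case 0
  then show ?case by simp
next
  case (Suc n)
  have "(\<Sum>t\<le>Suc n. (-1)^t * (x gchoose (Suc n - t)))
      = (x gchoose Suc n) - (\<Sum>t\<le>n. (-1)^t * (x gchoose (n - t)))"
    by (subst sum.atMost_Suc_shift) (simp add: sum_negf)
  also have "\<dots> = (x - 1) gchoose Suc n"
    using Suc gbinomial_Suc_Suc[of "x - 1" n] by simp
  finally show ?case .
qed

lemma Nsub_0: "Nsub 0 b (D::'a::comm_monoid_add set) = (if b = 0 then 1 else 0)"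
proof -
  have "{X. X \<subseteq> D \<and> finite X \<and> card X = 0 \<and> (\<Sum>x\<in>X. x) = b} = (if b = 0 then {{}} else {})"
    by auto
  then show ?thesis unfolding Nsub_def by simp
qed

(* The (k+1)-subsets of D with sum b containing y correspond, by deleting y,
   to the k-subsets of D - {y} with sum b - y. *)
lemma card_Nsub_containing:
  fixes D :: "'a::ab_group_add set"
  assumes "y \<in> D"
  shows "card {X. (X \<subseteq> D \<and> finite X \<and> card X = Suc k \<and> (\<Sum>x\<in>X. x) = b) \<and> y \<in> X}
       = Nsub k (b - y) (D - {y})"
  unfolding Nsub_def
proof (rule bij_betw_same_card[of "\<lambda>X. X - {y}"], rule bij_betw_byWitness[where f'="insert y"])
  show "\<forall>X\<in>{X. (X \<subseteq> D \<and> finite X \<and> card X = Suc k \<and> (\<Sum>x\<in>X. x) = b) \<and> y \<in> X}.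
          insert y (X - {y}) = X" by auto
  show "\<forall>X\<in>{X. X \<subseteq> D - {y} \<and> finite X \<and> card X = k \<and> (\<Sum>x\<in>X. x) = b - y}.
          insert y X - {y} = X" by auto
  show "(\<lambda>X. X - {y}) ` {X. (X \<subseteq> D \<and> finite X \<and> card X = Suc k \<and> (\<Sum>x\<in>X. x) = b) \<and> y \<in> X}
        \<subseteq> {X. X \<subseteq> D - {y} \<and> finite X \<and> card X = k \<and> (\<Sum>x\<in>X. x) = b - y}"
    by (auto simp: sum_diff1)
  show "insert y ` {X. X \<subseteq> D - {y} \<and> finite X \<and> card X = k \<and> (\<Sum>x\<in>X. x) = b - y}
        \<subseteq> {X. (X \<subseteq> D \<and> finite X \<and> card X = Suc k \<and> (\<Sum>x\<in>X. x) = b) \<and> y \<in> X}"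
    using assms by (auto simp: sum.insert_if card_insert_if)
qed

(* Pascal-type splitting according to whether y belongs to the subset. *)
lemma Nsub_split:
  fixes D :: "'a::{ab_group_add,finite} set"
  assumes "y \<in> D"
  shows "Nsub (Suc k) b D = Nsub (Suc k) b (D - {y}) + Nsub k (b - y) (D - {y})"
proof -
  let ?S = "{X. X \<subseteq> D \<and> finite X \<and> card X = Suc k \<and> (\<Sum>x\<in>X. x) = b}"
  let ?A = "{X. X \<subseteq> D - {y} \<and> finite X \<and> card X = Suc k \<and> (\<Sum>x\<in>X. x) = b}"
  let ?B = "{X. (X \<subseteq> D \<and> finite X \<and> card X = Suc k \<and> (\<Sum>x\<in>X. x) = b) \<and> y \<in> X}"
  have "?S = ?A \<union> ?B" and "?A \<inter> ?B = {}" by blast+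
  then have "card ?S = card ?A + card ?B"
    by (simp add: card_Un_disjoint)
  then show ?thesis using card_Nsub_containing[OF assms] unfolding Nsub_def by simp
qed

lemma Nsub_remove_point:
  fixes D :: "'a::{comm_ring_1,finite} set"
  assumes "y \<in> D"
  shows "real (Nsub k b (D - {y})) = (\<Sum>t\<le>k. (-1)^t * real (Nsub (k - t) (b - of_nat t * y) D))"
proof (induction k arbitrary: b)
  case 0
  then show ?case by (simp add: Nsub_0)
next
  case (Suc k)
  have "real (Nsub (Suc k) b (D - {y}))
      = real (Nsub (Suc k) b D) - real (Nsub k (b - y) (D - {y}))"
    using Nsub_split[OF assms, of k b] by simp
  also have "\<dots> = real (Nsub (Suc k) b D)
      - (\<Sum>t\<le>k. (-1)^t * real (Nsub (k - t) (b - y - of_nat t * y) D))"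
    using Suc by simp
  also have "\<dots> = (\<Sum>t\<le>Suc k. (-1)^t * real (Nsub (Suc k - t) (b - of_nat t * y) D))"
    by (subst sum.atMost_Suc_shift) (simp add: sum_negf algebra_simps)
  finally show ?case .
qed

(* Exponent tuples supported on J of total weight at most k; they index the
   terms produced by removing the points of a family indexed by J. *)
definition tuples :: "nat set \<Rightarrow> nat \<Rightarrow> (nat \<Rightarrow> nat) set" where
  "tuples J k = {i. (\<forall>j. j \<notin> J \<longrightarrow> i j = 0) \<and> sum i J \<le> k}"

lemma finite_tuples:
  assumes "finite J"
  shows "finite (tuples J k)"
proof -
  have "tuples J k \<subseteq> {i. \<forall>j. (j \<in> J \<longrightarrow> i j \<in> {..k}) \<and> (j \<notin> J \<longrightarrow> i j = 0)}"
  proof (intro subsetI CollectI allI conjI impI)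
    fix i j assume i: "i \<in> tuples J k"
    show "i j = 0" if "j \<notin> J" using i that unfolding tuples_def by simp
    assume "j \<in> J"
    then have "i j \<le> sum i J" by (rule member_le_sum) (use assms in auto)
    then show "i j \<in> {..k}" using i unfolding tuples_def by simp
  qed
  then show ?thesis
    using finite_set_of_finite_funs[OF assms, of "{..k}" 0] finite_subset by blast
qed

lemma tuples_empty: "tuples {} k = {\<lambda>_. 0}"
  unfolding tuples_def by auto

lemma sum_fun_upd_notin: "x \<notin> J \<Longrightarrow> (\<Sum>j\<in>J. g ((i(x:=t)) j) j) = (\<Sum>j\<in>J. g (i j) j)"
  by (rule sum.cong) auto

lemma sum_fun_upd_insert:
  "finite J \<Longrightarrow> x \<notin> J \<Longrightarrow> (\<Sum>j\<in>insert x J. g ((i(x:=t)) j) j) = g t x + (\<Sum>j\<in>J. g (i j) j)"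
  using sum_fun_upd_notin[of x J g i t] by simp

lemma weight_fun_upd_insert:
  "finite J \<Longrightarrow> x \<notin> J \<Longrightarrow> sum (i(x:=t)) (insert x J) = t + sum i J"
  using sum_fun_upd_insert[of J x "\<lambda>v j. v" i t] by simp

lemma sum_tuples_insert:
  assumes J: "finite J" and x: "x \<notin> J"
  shows "sum F (tuples (insert x J) k) = (\<Sum>t\<le>k. \<Sum>i\<in>tuples J (k - t). F (i(x:=t)))"
proof -
  have "(\<Sum>t\<le>k. \<Sum>i\<in>tuples J (k - t). F (i(x:=t)))
      = (\<Sum>(t,i)\<in>Sigma {..k} (\<lambda>t. tuples J (k - t)). F (i(x:=t)))"
    by (rule sum.Sigma) (auto intro: finite_tuples[OF J])
  also have "\<dots> = sum F (tuples (insert x J) k)"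
  proof (rule sum.reindex_bij_witness[where i="\<lambda>i. (i x, i(x:=0))" and j="\<lambda>(t,i). i(x:=t)"])
    fix ti assume "ti \<in> Sigma {..k} (\<lambda>t. tuples J (k - t))"
    then obtain t i where ti: "ti = (t, i)" "t \<le> k" "i \<in> tuples J (k - t)" by auto
    then have "i x = 0" using x unfolding tuples_def by auto
    then show "(\<lambda>i. (i x, i(x:=0))) (case ti of (t, i) \<Rightarrow> i(x:=t)) = ti"
      using ti by (simp add: fun_upd_idem)
    have "sum (i(x:=t)) (insert x J) \<le> k"
      using ti unfolding weight_fun_upd_insert[OF J x] tuples_def by auto
    then show "(case ti of (t, i) \<Rightarrow> i(x:=t)) \<in> tuples (insert x J) k"
      using ti unfolding tuples_def by simp
    show "F (case ti of (t, i) \<Rightarrow> i(x:=t)) = (case ti of (t, i) \<Rightarrow> F (i(x:=t)))"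
      using ti by simp
  next
    fix i assume i: "i \<in> tuples (insert x J) k"
    have "sum (i(x:=0)) J = sum i J" "sum i (insert x J) = i x + sum i J"
      using sum_fun_upd_notin[OF x, of "\<lambda>v j. v"] J x by simp_all
    then show "(i x, i(x:=0)) \<in> Sigma {..k} (\<lambda>t. tuples J (k - t))"
      using i unfolding tuples_def by auto
    show "(case (i x, i(x:=0)) of (t, i) \<Rightarrow> i(x:=t)) = i" by simp
  qed
  finally show ?thesis ..
qed

lemma Nsub_remove_family:
  fixes \<alpha> :: "nat \<Rightarrow> 'a::{comm_ring_1,finite}"
  assumes "finite J" and "inj_on \<alpha> J" and "\<alpha> ` J \<subseteq> E"
  shows "real (Nsub k b (E - \<alpha> ` J))
     = (\<Sum>i\<in>tuples J k. (-1)^(sum i J)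
          * real (Nsub (k - sum i J) (b - (\<Sum>j\<in>J. of_nat (i j) * \<alpha> j)) E))"
  using assms
proof (induction J arbitrary: k b rule: finite_induct)
  case empty
  then show ?case by (simp add: tuples_empty)
next
  case (insert x J)
  let ?N = "\<lambda>m e. real (Nsub m e E)"
  have "\<alpha> x \<in> E - \<alpha> ` J" and "E - \<alpha> ` insert x J = (E - \<alpha> ` J) - {\<alpha> x}"
    using insert by auto
  then have "real (Nsub k b (E - \<alpha> ` insert x J))
      = (\<Sum>t\<le>k. (-1)^t * real (Nsub (k - t) (b - of_nat t * \<alpha> x) (E - \<alpha> ` J)))"
    by (simp add: Nsub_remove_point)
  also have "\<dots> = (\<Sum>t\<le>k. \<Sum>i\<in>tuples J (k - t). (-1)^t * (-1)^(sum i J)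
       * ?N (k - t - sum i J) (b - of_nat t * \<alpha> x - (\<Sum>j\<in>J. of_nat (i j) * \<alpha> j)))"
    using insert by (simp add: sum_distrib_left mult.assoc)
  also have "\<dots> = (\<Sum>t\<le>k. \<Sum>i\<in>tuples J (k - t). (-1)^(sum (i(x:=t)) (insert x J))
       * ?N (k - sum (i(x:=t)) (insert x J))
            (b - (\<Sum>j\<in>insert x J. of_nat ((i(x:=t)) j) * \<alpha> j)))"
    unfolding weight_fun_upd_insert[OF insert.hyps]
      sum_fun_upd_insert[OF insert.hyps, where g="\<lambda>v j. of_nat v * \<alpha> j"]
    by (simp add: power_add algebra_simps diff_diff_eq)
  also have "\<dots> = (\<Sum>i\<in>tuples (insert x J) k. (-1)^(sum i (insert x J))
       * ?N (k - sum i (insert x J)) (b - (\<Sum>j\<in>insert x J. of_nat (i j) * \<alpha> j)))"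
    by (rule sum_tuples_insert[OF insert.hyps, symmetric])
  finally show ?case .
qed

lemma sum_tuples_gchoose:
  assumes "finite J"
  shows "(\<Sum>i\<in>tuples J k. (-1)^(sum i J) * ((x::real) gchoose (k - sum i J)))
       = (x - of_nat (card J)) gchoose k"
  using assms
proof (induction J arbitrary: k x rule: finite_induct)
  case empty
  then show ?case by (simp add: tuples_empty)
next
  case (insert y J)
  have "(\<Sum>i\<in>tuples (insert y J) k. (-1)^(sum i (insert y J)) * (x gchoose (k - sum i (insert y J))))
      = (\<Sum>t\<le>k. \<Sum>i\<in>tuples J (k - t).
           (-1)^(sum (i(y:=t)) (insert y J)) * (x gchoose (k - sum (i(y:=t)) (insert y J))))"
    by (rule sum_tuples_insert[OF insert.hyps])
  also have "\<dots> = (\<Sum>t\<le>k. (-1)^t * (\<Sum>i\<in>tuples J (k - t). (-1)^(sum i J) * (x gchoose (k - t - sum i J))))"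
    unfolding weight_fun_upd_insert[OF insert.hyps] sum_distrib_left
    by (simp add: power_add diff_diff_eq mult.assoc)
  also have "\<dots> = (\<Sum>t\<le>k. (-1)^t * ((x - of_nat (card J)) gchoose (k - t)))"
    by (simp only: insert.IH)
  also have "\<dots> = (x - of_nat (card J) - 1) gchoose k"
    by (rule alternating_gchoose_sum)
  finally show ?case using insert.hyps by (simp add: algebra_simps)
qed

(* The R-parts of the iterated formula add up to R^(|J|+2), by the recursive
   definition of R^c as iterated partial sums. *)
lemma sum_tuples_Rc:
  assumes "finite J"
  shows "(\<Sum>i\<in>tuples J k. Rc p q 2 (k - sum i J)) = Rc p q (card J + 2) k"
  using assms
proof (induction J arbitrary: k rule: finite_induct)
  case empty
  then show ?case by (simp add: tuples_empty numeral_2_eq_2)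
next
  case (insert y J)
  have "(\<Sum>i\<in>tuples (insert y J) k. Rc p q 2 (k - sum i (insert y J)))
      = (\<Sum>t\<le>k. \<Sum>i\<in>tuples J (k - t). Rc p q 2 (k - t - sum i J))"
    unfolding sum_tuples_insert[OF insert.hyps] weight_fun_upd_insert[OF insert.hyps]
    by (simp add: diff_diff_eq)
  also have "\<dots> = (\<Sum>t\<le>k. Rc p q (card J + 2) (k - t))"
    by (simp only: insert.IH)
  also have "\<dots> = (\<Sum>t\<le>k. Rc p q (card J + 2) t)"
    by (rule sum_reverse)
  also have "\<dots> = Rc p q (card (insert y J) + 2) k"
    using insert.hyps by (simp add: numeral_2_eq_2)
  finally show ?case .
qed

lemma Nsub_double_count:
  fixes \<beta> :: "'a::{ab_group_add,finite}"
  shows "real (Suc n) * real (Nsub (Suc n) \<beta> UNIV)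
       = (\<Sum>x\<in>UNIV. real (Nsub n (\<beta> - x) (UNIV - {x})))"
proof -
  let ?S = "{X. X \<subseteq> (UNIV::'a set) \<and> finite X \<and> card X = Suc n \<and> (\<Sum>x\<in>X. x) = \<beta>}"
  have "(\<Sum>x\<in>UNIV. real (Nsub n (\<beta> - x) (UNIV - {x})))
      = (\<Sum>x\<in>UNIV. real (card (?S \<inter> {X. x \<in> X})))"
    using card_Nsub_containing[of _ UNIV n \<beta>] by (simp add: Int_def conj_commute)
  also have "\<dots> = (\<Sum>x\<in>UNIV. \<Sum>X\<in>?S. (of_bool (x \<in> X) :: real))"
    by (simp add: sum_of_bool_eq)
  also have "\<dots> = (\<Sum>X\<in>?S. \<Sum>x\<in>UNIV. (of_bool (x \<in> X) :: real))"
    by (rule sum.swap)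
  also have "\<dots> = (\<Sum>X\<in>?S. real (Suc n))"
    by (intro sum.cong refl) (simp add: sum_of_bool_eq)
  also have "\<dots> = real (Suc n) * real (Nsub (Suc n) \<beta> UNIV)"
    unfolding Nsub_def by simp
  finally show ?thesis ..
qed

lemma sum_Nsub_over_sums:
  "(\<Sum>\<gamma>\<in>UNIV. real (Nsub j \<gamma> (UNIV :: 'a::{comm_monoid_add,finite} set))) = real (CARD('a) choose j)"
proof -
  let ?A = "{X. X \<subseteq> (UNIV::'a set) \<and> card X = j}"
  have "(\<Sum>\<gamma>\<in>UNIV. real (Nsub j \<gamma> (UNIV :: 'a set)))
      = (\<Sum>\<gamma>\<in>UNIV. \<Sum>X\<in>{X \<in> ?A. (\<Sum>x\<in>X. x) = \<gamma>}. (1::real))"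
    unfolding Nsub_def by (intro sum.cong) auto
  also have "\<dots> = (\<Sum>X\<in>?A. (1::real))"
    by (rule sum.group) auto
  also have "\<dots> = real (CARD('a) choose j)"
    using n_subsets[of "UNIV :: 'a set" j] by simp
  finally show ?thesis .
qed

(* As x ranges over F_q, beta - s x ranges over all of F_q when s is a unit of
   F_q, and is constantly beta when the characteristic divides s. *)
lemma sum_Nsub_affine:
  fixes \<beta> :: "'a::{field,finite}"
  shows "(\<Sum>x\<in>UNIV. real (Nsub m (\<beta> - of_nat s * x) UNIV))
       = (if CHAR('a) dvd s then real CARD('a) * real (Nsub m \<beta> UNIV)
          else real CARD('a) gchoose m)"
proof (cases "CHAR('a) dvd s")
  case True
  then have "(of_nat s :: 'a) = 0" by (simp add: of_nat_eq_0_iff_char_dvd)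
  then show ?thesis using True by simp
next
  case False
  then have s: "(of_nat s :: 'a) \<noteq> 0" by (simp add: of_nat_eq_0_iff_char_dvd)
  have "(\<Sum>x\<in>UNIV. real (Nsub m (\<beta> - of_nat s * x) UNIV)) = (\<Sum>\<gamma>\<in>UNIV. real (Nsub m \<gamma> (UNIV :: 'a set)))"
    by (rule sum.reindex_bij_witness[where i="\<lambda>\<gamma>. (\<beta> - \<gamma>) / of_nat s" and j="\<lambda>x. \<beta> - of_nat s * x"])
       (use s in \<open>auto simp: field_simps\<close>)
  then show ?thesis
    using False by (simp add: sum_Nsub_over_sums binomial_gbinomial)
qed

(* A recursion for N(m,beta,F_q) in m, from double counting and removing x. *)
lemma Nsub_field_recursion:
  fixes \<beta> :: "'a::{field,finite}"
  shows "real (Suc n) * real (Nsub (Suc n) \<beta> UNIV) = (\<Sum>t\<le>n. (-1)^t *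
     (if CHAR('a) dvd Suc t then real CARD('a) * real (Nsub (n - t) \<beta> UNIV)
      else real CARD('a) gchoose (n - t)))"
proof -
  have "real (Suc n) * real (Nsub (Suc n) \<beta> UNIV) = (\<Sum>x\<in>UNIV. real (Nsub n (\<beta> - x) (UNIV - {x})))"
    by (rule Nsub_double_count)
  also have "\<dots> = (\<Sum>x\<in>UNIV. \<Sum>t\<le>n. (-1)^t * real (Nsub (n - t) (\<beta> - of_nat (Suc t) * x) UNIV))"
    by (simp add: Nsub_remove_point algebra_simps)
  also have "\<dots> = (\<Sum>t\<le>n. (-1)^t * (\<Sum>x\<in>UNIV. real (Nsub (n - t) (\<beta> - of_nat (Suc t) * x) UNIV)))"
    by (subst sum.swap) (simp add: sum_distrib_left)
  finally show ?thesis by (simp only: sum_Nsub_affine)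
qed

lemma Nsub_field_deviation_recursion:
  fixes \<beta> :: "'a::{field,finite}"
  defines "\<Delta> \<equiv> \<lambda>m. real CARD('a) * real (Nsub m \<beta> UNIV) - (real CARD('a) gchoose m)"
  shows "real (Suc n) * \<Delta> (Suc n)
       = (\<Sum>t\<le>n. real CARD('a) * (if CHAR('a) dvd Suc t then (-1)^t else 0) * \<Delta> (n - t))"
proof -
  let ?q = "real CARD('a)"
  have "(\<Sum>t\<le>n. (-1)^t * (if CHAR('a) dvd Suc t then ?q * real (Nsub (n - t) \<beta> UNIV)
                              else ?q gchoose (n - t)))
      = (\<Sum>t\<le>n. (-1)^t * (?q gchoose (n - t)))
        + (\<Sum>t\<le>n. (if CHAR('a) dvd Suc t then (-1)^t else 0) * \<Delta> (n - t))"
    unfolding sum.distrib[symmetric] \<Delta>_def by (intro sum.cong) (auto simp: algebra_simps)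
  moreover have "real (Suc n) * (?q gchoose Suc n) = ?q * ((?q - 1) gchoose n)"
    by (rule gbinomial_absorption)
  ultimately show ?thesis
    unfolding \<Delta>_def using Nsub_field_recursion[of n \<beta>]
    by (simp add: alternating_gchoose_sum sum_distrib_left algebra_simps)
qed

(* Ecoef p Q n is the coefficient of z^n in (1 - z^p)^Q. *)
definition Ecoef :: "nat \<Rightarrow> real \<Rightarrow> nat \<Rightarrow> real" where
  "Ecoef p Q n = (if p dvd n then (-1)^(n div p) * (Q gchoose (n div p)) else 0)"

lemma sum_dvd_reindex:
  fixes p :: nat
  assumes "p > 0"
  shows "(\<Sum>s\<le>n. if p dvd s then g (s div p) else 0) = (\<Sum>u\<le>n div p. (g u :: real))"
proof -
  have "{s. s \<le> n \<and> p dvd s} = (\<lambda>u. p * u) ` {..n div p}"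
  proof (intro set_eqI iffI)
    fix s assume "s \<in> {s. s \<le> n \<and> p dvd s}"
    then obtain u where "s = p * u" "p * u \<le> n" by auto
    moreover have "u \<le> n div p"
      using div_le_mono[OF \<open>p * u \<le> n\<close>, of p] assms by simp
    ultimately show "s \<in> (\<lambda>u. p * u) ` {..n div p}" by auto
  next
    fix s assume "s \<in> (\<lambda>u. p * u) ` {..n div p}"
    then obtain u where u: "s = p * u" "u \<le> n div p" by auto
    then have "p * u \<le> p * (n div p)" by simp
    also have "\<dots> \<le> n" by simp
    finally have "p * u \<le> n" .
    then show "s \<in> {s. s \<le> n \<and> p dvd s}" using u by auto
  qed
  moreover have "inj_on (\<lambda>u. p * u) {..n div p}"
    using assms by (simp add: inj_on_def)
  ultimately show ?thesis
    using assms by (simp add: sum.If_cases Int_def sum.reindex)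
qed

lemma sum_Ecoef:
  assumes "p > 0"
  shows "(\<Sum>s\<le>n. Ecoef p Q s) = (-1)^(n div p) * ((Q - 1) gchoose (n div p))"
  using sum_dvd_reindex[OF assms, where n=n and g="\<lambda>u. (-1)^u * (Q gchoose u)"]
    gbinomial_sum_lower_neg[of Q "n div p"]
  unfolding Ecoef_def by (simp add: mult.commute)

lemma sum_Ecoef_shifted:
  assumes p: "p > 0"
  shows "(\<Sum>t\<le>n. if p dvd Suc t then Ecoef p Q (n - t) else 0)
       = (if p dvd Suc n then (-1)^(n div p) * ((Q - 1) gchoose (n div p)) else 0)"
proof -
  have shift: "(if p dvd Suc n - s then Ecoef p Q s else 0) = (if p dvd Suc n then Ecoef p Q s else 0)"
    if "s \<le> n" for s
  proof (cases "p dvd s")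
    case True
    then have "p dvd Suc n - s \<longleftrightarrow> p dvd Suc n"
      using that dvd_diff_nat[of p "Suc n" s] dvd_add[of p "Suc n - s" s] by auto
    then show ?thesis by simp
  next
    case False
    then show ?thesis by (simp add: Ecoef_def)
  qed
  have "(\<Sum>t\<le>n. if p dvd Suc t then Ecoef p Q (n - t) else 0)
      = (\<Sum>t\<le>n. (\<lambda>s. if p dvd Suc n - s then Ecoef p Q s else 0) (n - t))"
    by (intro sum.cong) (auto simp: Suc_diff_le)
  also have "\<dots> = (\<Sum>s\<le>n. if p dvd Suc n - s then Ecoef p Q s else 0)"
    by (rule sum_reverse)
  also have "\<dots> = (\<Sum>s\<le>n. if p dvd Suc n then Ecoef p Q s else 0)"
    by (intro sum.cong) (auto simp: shift)
  finally show ?thesis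
    by (simp add: sum_Ecoef[OF p])
qed

(* The sequence (-1)^n Ecoef p Q n satisfies the same recursion as the
   deviation, with q = p Q. *)
lemma Ecoef_recursion:
  assumes p: "p > 0"
  shows "real (Suc n) * ((-1)^Suc n * Ecoef p Q (Suc n))
       = (\<Sum>t\<le>n. (real p * Q) * (if p dvd Suc t then (-1)^t else 0) * ((-1)^(n - t) * Ecoef p Q (n - t)))"
proof -
  have "(\<Sum>t\<le>n. (real p * Q) * (if p dvd Suc t then (-1)^t else 0) * ((-1)^(n - t) * Ecoef p Q (n - t)))
      = real p * Q * (-1)^n * (\<Sum>t\<le>n. if p dvd Suc t then Ecoef p Q (n - t) else 0)"
    unfolding sum_distrib_left
    by (intro sum.cong refl) (auto simp: neg_one_power_split[symmetric])
  also have "\<dots> = real p * Q * (-1)^n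
      * (if p dvd Suc n then (-1)^(n div p) * ((Q - 1) gchoose (n div p)) else 0)"
    by (simp only: sum_Ecoef_shifted[OF p])
  also have "\<dots> = real (Suc n) * ((-1)^Suc n * Ecoef p Q (Suc n))"
  proof (cases "p dvd Suc n")
    case True
    then obtain M where M: "Suc n = p * Suc M"
      by (metis dvd_def mult_0_right nat.distinct(1) not0_implies_Suc)
    then have ndiv: "n div p = M"
      using p by (intro div_nat_eqI) simp_all
    have E: "Ecoef p Q (Suc n) = (-1)^Suc M * (Q gchoose Suc M)"
      using M p by (simp add: Ecoef_def)
    have rs: "real (Suc n) = real p * real (Suc M)"
      using M by (simp only: of_nat_mult[symmetric])
    have "real (Suc n) * ((-1)^Suc n * Ecoef p Q (Suc n))
        = real p * ((-1)^Suc n * (-1)^Suc M) * (real (Suc M) * (Q gchoose Suc M))"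
      unfolding E rs by (simp only: mult_ac)
    also have "\<dots> = real p * ((-1)^n * (-1)^M) * (Q * ((Q - 1) gchoose M))"
      by (simp only: gbinomial_absorption) simp
    finally show ?thesis
      using True ndiv by (simp only: if_True mult_ac)
  next
    case False
    then show ?thesis by (simp add: Ecoef_def)
  qed
  finally show ?thesis ..
qed

lemma recursion_unique:
  fixes f g :: "nat \<Rightarrow> real"
  assumes "f 0 = g 0"
    and f: "\<And>n. real (Suc n) * f (Suc n) = (\<Sum>t\<le>n. w t * f (n - t))"
    and g: "\<And>n. real (Suc n) * g (Suc n) = (\<Sum>t\<le>n. w t * g (n - t))"
  shows "f m = g m"
proof (induction m rule: less_induct)
  case (less m)
  show ?case
  proof (cases m)
    case 0
    then show ?thesis using assms(1) by simp
  next
    case (Suc n)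
    have "(\<Sum>t\<le>n. w t * f (n - t)) = (\<Sum>t\<le>n. w t * g (n - t))"
      using less Suc by (intro sum.cong) auto
    then have "real (Suc n) * f (Suc n) = real (Suc n) * g (Suc n)"
      by (simp only: f g)
    then show ?thesis using Suc by simp
  qed
qed

lemma Nsub_field:
  fixes \<beta> :: "'a::{field,finite}"
  shows "real (Nsub m \<beta> UNIV) = (1 / real CARD('a)) * (real CARD('a) gchoose m)
     + (-1)^m * Ecoef CHAR('a) (real CARD('a) / real CHAR('a)) m
        * ((if \<beta> = 0 then 1 else 0) - 1 / real CARD('a))"
proof -
  let ?q = "real CARD('a)" and ?p = "CHAR('a)"
  let ?Q = "?q / real ?p" and ?W = "if \<beta> = 0 then ?q - 1 else -1"
  have p: "?p > 0" by (simp add: finite_imp_CHAR_pos)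
  then have qQ: "real ?p * ?Q = ?q" by simp
  have "?q * real (Nsub m \<beta> UNIV) - (?q gchoose m) = ?W * ((-1)^m * Ecoef ?p ?Q m)"
  proof (rule recursion_unique[where w="\<lambda>t. ?q * (if ?p dvd Suc t then (-1)^t else 0)"])
    show "?q * real (Nsub 0 \<beta> UNIV) - (?q gchoose 0) = ?W * ((-1)^0 * Ecoef ?p ?Q 0)"
      by (simp add: Nsub_0 Ecoef_def)
    show "real (Suc n) * (?q * real (Nsub (Suc n) \<beta> UNIV) - (?q gchoose Suc n))
        = (\<Sum>t\<le>n. ?q * (if ?p dvd Suc t then (-1)^t else 0)
                    * (?q * real (Nsub (n - t) \<beta> UNIV) - (?q gchoose (n - t))))" for n
      by (rule Nsub_field_deviation_recursion)
    show "real (Suc n) * (?W * ((-1)^Suc n * Ecoef ?p ?Q (Suc n)))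
        = (\<Sum>t\<le>n. ?q * (if ?p dvd Suc t then (-1)^t else 0) * (?W * ((-1)^(n - t) * Ecoef ?p ?Q (n - t))))" for n
    proof -
      have "real (Suc n) * (?W * ((-1)^Suc n * Ecoef ?p ?Q (Suc n)))
          = ?W * (real (Suc n) * ((-1)^Suc n * Ecoef ?p ?Q (Suc n)))"
        by (simp only: mult_ac)
      also have "\<dots> = ?W * (\<Sum>t\<le>n. (real ?p * ?Q) * (if ?p dvd Suc t then (-1)^t else 0)
                                 * ((-1)^(n - t) * Ecoef ?p ?Q (n - t)))"
        by (simp only: Ecoef_recursion[OF p])
      finally show ?thesis
        unfolding qQ sum_distrib_left by (simp only: mult_ac)
    qed
  qed
  then show ?thesis
    by (simp add: field_simps)
qed

lemma R1_eq_Ecoef_sum: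
  assumes "p > 0"
  shows "R1 p q n = - (\<Sum>s\<le>n. Ecoef p (real q / real p) s)"
  unfolding R1_def sum_Ecoef[OF assms] by simp

lemma Nsub_field_minus_zero:
  fixes \<gamma> :: "'a::{field,finite}"
  shows "real (Nsub n \<gamma> (UNIV - {0})) = (1 / real CARD('a)) * ((real CARD('a) - 1) gchoose n)
     - (-1)^n * ((if \<gamma> = 0 then 1 else 0) - 1 / real CARD('a)) * R1 CHAR('a) CARD('a) n"
proof -
  let ?q = "real CARD('a)" and ?p = "CHAR('a)"
  let ?E = "Ecoef ?p (?q / real ?p)" and ?V = "(if \<gamma> = 0 then 1 else 0) - 1 / ?q"
  have p: "?p > 0" by (simp add: finite_imp_CHAR_pos)
  have "real (Nsub n \<gamma> (UNIV - {0})) = (\<Sum>t\<le>n. (-1)^t * real (Nsub (n - t) \<gamma> UNIV))"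
    using Nsub_remove_point[of 0 UNIV n \<gamma>] by simp
  also have "\<dots> = (\<Sum>t\<le>n. (1 / ?q) * ((-1)^t * (?q gchoose (n - t))) + (-1)^n * ?V * ?E (n - t))"
  proof (intro sum.cong refl)
    fix t assume "t \<in> {..n}"
    then have sign: "(-1::real)^t * (-1)^(n - t) = (-1)^n" by (simp add: neg_one_power_split)
    show "(-1)^t * real (Nsub (n - t) \<gamma> UNIV)
        = (1 / ?q) * ((-1)^t * (?q gchoose (n - t))) + (-1)^n * ?V * ?E (n - t)"
      unfolding Nsub_field[of "n - t" \<gamma>] sign[symmetric] by (simp only: algebra_simps)
  qed
  also have "\<dots> = (1 / ?q) * ((?q - 1) gchoose n) + (-1)^n * ?V * (\<Sum>t\<le>n. ?E (n - t))"
    by (simp only: sum.distrib sum_distrib_left[symmetric] alternating_gchoose_sum)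
  also have "(\<Sum>t\<le>n. ?E (n - t)) = - R1 ?p CARD('a) n"
    by (simp add: sum_reverse R1_eq_Ecoef_sum[OF p])
  finally show ?thesis by simp
qed

lemma Sfun_eq: "Sfun p q k (e::'a::field) = (\<Sum>i\<in>{i. i \<le> k \<and> (of_nat i :: 'a) = e}. R1 p q i)"
proof (cases "e \<in> range (of_nat :: nat \<Rightarrow> 'a)")
  case True
  then show ?thesis unfolding Sfun_def by simp
next
  case False
  then have "{i. i \<le> k \<and> (of_nat i :: 'a) = e} = {}" by auto
  then show ?thesis using False unfolding Sfun_def by (simp only: if_False sum.empty)
qed

lemma Sfun_as_convolution:
  fixes \<beta> :: "'a::field"
  shows "(\<Sum>u\<le>m. (if \<beta> = of_nat u then 1 else 0) * R1 p q (m - u)) = Sfun p q m (of_nat m - \<beta>)"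
proof -
  have "(\<Sum>u\<le>m. (if \<beta> = of_nat u then 1 else 0) * R1 p q (m - u))
      = (\<Sum>u\<le>m. (\<lambda>i. (if \<beta> = of_nat (m - i) then 1 else 0) * R1 p q i) (m - u))"
    by (intro sum.cong) (simp_all add: diff_diff_cancel)
  also have "\<dots> = (\<Sum>i\<le>m. (if \<beta> = of_nat (m - i) then 1 else 0) * R1 p q i)"
    by (rule sum_reverse)
  also have "\<dots> = (\<Sum>i\<le>m. if (of_nat i :: 'a) = of_nat m - \<beta> then R1 p q i else 0)"
  proof (intro sum.cong refl)
    fix i assume "i \<in> {..m}"
    then have h: "(of_nat (m - i) :: 'a) = of_nat m - of_nat i" by (simp add: of_nat_diff)
    have "(\<beta> = of_nat (m - i)) = ((of_nat i :: 'a) = of_nat m - \<beta>)"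
      unfolding h eq_diff_eq by (simp add: add.commute)
    then show "(if \<beta> = of_nat (m - i) then 1 else 0) * R1 p q i
             = (if (of_nat i :: 'a) = of_nat m - \<beta> then R1 p q i else 0)" by simp
  qed
  also have "\<dots> = Sfun p q m (of_nat m - \<beta>)"
    by (simp add: Sfun_eq sum.If_cases Int_def atMost_def conj_commute)
  finally show ?thesis .
qed

(* Removing 0 and 1 from the field: the case c = 2 of the theorem. *)
lemma Nsub_field_minus_zero_one:
  fixes \<beta> :: "'a::{field,finite}"
  shows "real (Nsub m \<beta> (UNIV - {0, 1})) = (1 / real CARD('a)) * ((real CARD('a) - 2) gchoose m)
     + (1 / real CARD('a)) * (-1)^m * Rc CHAR('a) CARD('a) 2 m
     - (-1)^m * Sfun CHAR('a) CARD('a) m (of_nat m - \<beta>)"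
proof -
  let ?q = "real CARD('a)" and ?R = "R1 CHAR('a) CARD('a)"
  let ?I = "\<lambda>u. if \<beta> = of_nat u then 1 else 0"
  have "real (Nsub m \<beta> (UNIV - {0, 1})) = (\<Sum>u\<le>m. (-1)^u * real (Nsub (m - u) (\<beta> - of_nat u) (UNIV - {0})))"
    using Nsub_remove_point[of 1 "UNIV - {0}" m \<beta>] by (simp add: Diff_insert2[symmetric])
  also have "\<dots> = (\<Sum>u\<le>m. (1 / ?q) * ((-1)^u * ((?q - 1) gchoose (m - u)))
         + (1 / ?q) * (-1)^m * ?R (m - u) - (-1)^m * (?I u * ?R (m - u)))"
  proof (intro sum.cong refl)
    fix u assume "u \<in> {..m}"
    then have sign: "(-1::real)^u * (-1)^(m - u) = (-1)^m" by (simp add: neg_one_power_split)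
    have "(\<beta> - of_nat u = 0) = (\<beta> = of_nat u)" by simp
    then show "(-1)^u * real (Nsub (m - u) (\<beta> - of_nat u) (UNIV - {0}))
        = (1 / ?q) * ((-1)^u * ((?q - 1) gchoose (m - u)))
          + (1 / ?q) * (-1)^m * ?R (m - u) - (-1)^m * (?I u * ?R (m - u))"
      unfolding Nsub_field_minus_zero sign[symmetric] by (simp only: algebra_simps)
  qed
  also have "\<dots> = (1 / ?q) * ((?q - 2) gchoose m) + (1 / ?q) * (-1)^m * (\<Sum>u\<le>m. ?R (m - u))
      - (-1)^m * (\<Sum>u\<le>m. ?I u * ?R (m - u))"
    using alternating_gchoose_sum[where n=m and x="?q - 1"]
    by (simp only: sum.distrib sum_subtractf sum_distrib_left[symmetric] diff_diff_eq one_add_one)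
  also have "(\<Sum>u\<le>m. ?R (m - u)) = Rc CHAR('a) CARD('a) 2 m"
    by (simp add: sum_reverse numeral_2_eq_2)
  finally show ?thesis
    by (simp only: Sfun_as_convolution)
qed

lemma Nsub_field_minus_family:
  fixes \<alpha> :: "nat \<Rightarrow> 'a::{field,finite}" and b :: 'a
  defines "q \<equiv> CARD('a)" and "p \<equiv> CHAR('a)"
  assumes J: "finite J" and inj: "inj_on \<alpha> J" and disj: "\<alpha> ` J \<inter> {0, 1} = {}"
  shows "real (Nsub k b (UNIV - {0, 1} - \<alpha> ` J))
       = (1 / real q) * real ((q - (card J + 2)) choose k)
         + (1 / real q) * (-1)^k * Rc p q (card J + 2) k
         - (-1)^k * (\<Sum>i\<in>tuples J k. Sfun p q (k - sum i J)
                        (of_nat (k - sum i J) - b + (\<Sum>j\<in>J. of_nat (i j) * \<alpha> j)))"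
proof -
  let ?m = "\<lambda>i. k - sum i J" and ?e = "\<lambda>i. \<Sum>j\<in>J. of_nat (i j) * \<alpha> j"
  let ?S = "\<lambda>i. Sfun p q (?m i) (of_nat (?m i) - b + ?e i)"
  have "card (\<alpha> ` J \<union> {0, 1}) = card J + 2"
    using J inj disj by (simp add: card_Un_disjoint card_image)
  then have card: "card J + 2 \<le> q"
    unfolding q_def by (metis card_mono finite subset_UNIV)
  have "real (Nsub k b (UNIV - {0, 1} - \<alpha> ` J))
      = (\<Sum>i\<in>tuples J k. (-1)^(sum i J) * real (Nsub (?m i) (b - ?e i) (UNIV - {0, 1})))"
    using disj by (intro Nsub_remove_family J inj) auto
  also have "\<dots> = (\<Sum>i\<in>tuples J k. (1 / real q) * ((-1)^(sum i J) * ((real q - 2) gchoose ?m i))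
       + (1 / real q) * (-1)^k * Rc p q 2 (?m i) - (-1)^k * ?S i)"
  proof (intro sum.cong refl)
    fix i assume "i \<in> tuples J k"
    then have sign: "(-1::real)^(sum i J) * (-1)^(?m i) = (-1)^k"
      unfolding tuples_def by (simp add: neg_one_power_split)
    have "of_nat (?m i) - (b - ?e i) = of_nat (?m i) - b + ?e i" by (simp add: algebra_simps)
    then show "(-1)^(sum i J) * real (Nsub (?m i) (b - ?e i) (UNIV - {0, 1}))
        = (1 / real q) * ((-1)^(sum i J) * ((real q - 2) gchoose ?m i))
          + (1 / real q) * (-1)^k * Rc p q 2 (?m i) - (-1)^k * ?S i"
      unfolding Nsub_field_minus_zero_one p_def q_def sign[symmetric] by (simp only: algebra_simps)
  qed
  also have "\<dots> = (1 / real q) * ((real q - 2 - of_nat (card J)) gchoose k)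
       + (1 / real q) * (-1)^k * Rc p q (card J + 2) k - (-1)^k * sum ?S (tuples J k)"
    unfolding sum_tuples_gchoose[OF J, symmetric] sum_tuples_Rc[OF J, symmetric]
    by (simp add: sum.distrib sum_subtractf sum_distrib_left)
  also have "real q - 2 - of_nat (card J) = real (q - (card J + 2))"
    using card by (simp add: of_nat_diff)
  finally show ?thesis
    by (simp add: binomial_gbinomial)
qed

lemma sum_reflect:
  fixes c :: nat
  assumes "c \<ge> 3"
  shows "(\<Sum>j=3..c. f (c + 1 - j) j) = (\<Sum>j=1..c-2. f j (c + 1 - j))"
  by (rule sum.reindex_bij_witness[where i="\<lambda>j. c + 1 - j" and j="\<lambda>j. c + 1 - j"]) (use assms in auto)

lemma removed_points_reindexed:
  fixes a :: "nat \<Rightarrow> 'a::{zero,one}"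
  assumes c3: "c \<ge> 3" and a1: "a 1 = 0" and a2: "a 2 = 1" and dist: "inj_on a {1..c}"
  shows "UNIV - a ` {1..c} = UNIV - {0, 1} - (\<lambda>j. a (c + 1 - j)) ` {1..c-2}"
    and "inj_on (\<lambda>j. a (c + 1 - j)) {1..c-2}"
    and "(\<lambda>j. a (c + 1 - j)) ` {1..c-2} \<inter> {0, 1} = {}"
proof -
  have refl: "(\<lambda>j. c + 1 - j) ` {1..c-2} = {3..c}"
  proof
    show "{3..c} \<subseteq> (\<lambda>j. c + 1 - j) ` {1..c-2}"
    proof
      fix x assume "x \<in> {3..c}"
      then show "x \<in> (\<lambda>j. c + 1 - j) ` {1..c-2}"
        by (intro image_eqI[where x="c + 1 - x"]) auto
    qed
  qed (use c3 in auto)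
  have img: "(\<lambda>j. a (c + 1 - j)) ` {1..c-2} = a ` {3..c}"
    using image_comp[of a "\<lambda>j. c + 1 - j" "{1..c-2}"] refl by (simp add: comp_def)
  have "{1..c} = {1, 2} \<union> {3..c}" using c3 by auto
  then have "a ` {1..c} = {0, 1} \<union> a ` {3..c}" using a1 a2 by auto
  then show "UNIV - a ` {1..c} = UNIV - {0, 1} - (\<lambda>j. a (c + 1 - j)) ` {1..c-2}"
    unfolding img by auto
  have "inj_on (\<lambda>j. c + 1 - j) {1..c-2}" by (auto simp: inj_on_def)
  moreover have "inj_on a ((\<lambda>j. c + 1 - j) ` {1..c-2})"
    unfolding refl using dist by (rule inj_on_subset) auto
  ultimately show "inj_on (\<lambda>j. a (c + 1 - j)) {1..c-2}"
    using comp_inj_on[of "\<lambda>j. c + 1 - j" "{1..c-2}" a] by (simp add: comp_def)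
  have "a i \<noteq> a 1" "a i \<noteq> a 2" if "i \<in> {3..c}" for i
    using that c3 by (auto simp: inj_on_eq_iff[OF dist])
  then show "(\<lambda>j. a (c + 1 - j)) ` {1..c-2} \<inter> {0, 1} = {}"
    unfolding img using a1 a2 by auto
qed

(* Under linear independence of b, a 2, ..., a c over F_p, no argument of S in
   the theorem lies in F_p: otherwise -1 times b would be an F_p-combination of
   a 2, ..., a c. *)
lemma shifted_sum_not_in_prime_field:
  fixes a :: "nat \<Rightarrow> 'a::{field,finite}"
  assumes c3: "c \<ge> 3" and a2: "a 2 = 1"
    and indep: "\<forall>l :: nat \<Rightarrow> nat. of_nat (l 0) * b + (\<Sum>j=2..c. of_nat (l j) * a j) = 0
                  \<longrightarrow> (\<forall>j\<in>insert 0 {2..c}. (of_nat (l j) :: 'a) = 0)"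
  shows "of_nat m - b + (\<Sum>j=1..c-2. of_nat (i j) * a (c + 1 - j)) \<notin> range (of_nat :: nat \<Rightarrow> 'a)"
proof
  let ?e = "of_nat m - b + (\<Sum>j=1..c-2. of_nat (i j) * a (c + 1 - j))"
  assume "?e \<in> range (of_nat :: nat \<Rightarrow> 'a)"
  then obtain n where n: "?e = of_nat n" by auto
  have "CHAR('a) > 0" by (simp add: finite_imp_CHAR_pos)
  then have minus_one: "(of_nat (CHAR('a) - 1) :: 'a) = -1" by (simp add: of_nat_diff)
  define l where "l = (\<lambda>j. if j = 0 then CHAR('a) - 1 else if j = 2 then m + (CHAR('a) - 1) * n
                            else if j \<le> c then i (c + 1 - j) else 0)"
  have "{2..c} = insert 2 {3..c}" using c3 by auto
  then have "(\<Sum>j=2..c. of_nat (l j) * a j) = of_nat (l 2) * a 2 + (\<Sum>j=3..c. of_nat (l j) * a j)"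
    by simp
  also have "(\<Sum>j=3..c. of_nat (l j) * a j) = (\<Sum>j=3..c. of_nat (i (c + 1 - j)) * a j)"
    by (rule sum.cong) (auto simp: l_def)
  also have "\<dots> = (\<Sum>j=1..c-2. of_nat (i j) * a (c + 1 - j))"
    by (rule sum_reflect[OF c3])
  also have "of_nat (l 2) * a 2 = (of_nat m - of_nat n :: 'a)"
    unfolding l_def a2 using minus_one by simp
  finally have "of_nat (l 0) * b + (\<Sum>j=2..c. of_nat (l j) * a j) = ?e - of_nat n"
    unfolding l_def using minus_one by (simp add: algebra_simps)
  then have "of_nat (l 0) * b + (\<Sum>j=2..c. of_nat (l j) * a j) = 0" using n by simp
  then have "(of_nat (l 0) :: 'a) = 0" using indep by blast
  then show False unfolding l_def using minus_one by simp
qed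

theorem lemma4p2:
  fixes a :: "nat \<Rightarrow> 'a::{field,finite}" and b :: 'a and c k :: nat
  defines "q \<equiv> CARD('a)" and "p \<equiv> CHAR('a)"
      and "D \<equiv> UNIV - a ` {1..c}"
  assumes c3: "c \<ge> 3"
      and a1: "a 1 = 0" and a2: "a 2 = 1"
      and dist: "inj_on a {1..c}"
      and k1: "1 \<le> k" and kq: "k \<le> q - c"
  shows "(real (Nsub k b D) - (1 / real q) * real ((q - c) choose k)
         = (1 / real q) * (-1) ^ k * Rc p q c k
           - (-1) ^ k * (\<Sum>i\<in>{i :: nat \<Rightarrow> nat. (\<forall>j. j \<notin> {1..c-2} \<longrightarrow> i j = 0)
                                    \<and> (\<Sum>j=1..c-2. i j) \<le> k}.
               Sfun p q (k - (\<Sum>j=1..c-2. i j))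
                 (of_nat (k - (\<Sum>j=1..c-2. i j)) - b
                   + (\<Sum>j=1..c-2. of_nat (i j) * a (c + 1 - j)))))
    \<and> ((\<forall>l :: nat \<Rightarrow> nat.
            of_nat (l 0) * b + (\<Sum>j=2..c. of_nat (l j) * a j) = 0
            \<longrightarrow> (\<forall>j\<in>insert 0 {2..c}. (of_nat (l j) :: 'a) = 0))
         \<longrightarrow> real (Nsub k b D) = (1 / real q) * real ((q - c) choose k)
                                 + (1 / real q) * (-1) ^ k * Rc p q c k)"
proof -
  let ?S = "\<lambda>i. Sfun p q (k - (\<Sum>j=1..c-2. i j))
                 (of_nat (k - (\<Sum>j=1..c-2. i j)) - b + (\<Sum>j=1..c-2. of_nat (i j) * a (c + 1 - j)))"
  note points = removed_points_reindexed[OF c3 a1 a2 dist]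
  have "card {1..c-2} + 2 = c" using c3 by simp
  then have count: "real (Nsub k b D) = (1 / real q) * real ((q - c) choose k)
      + (1 / real q) * (-1)^k * Rc p q c k - (-1)^k * sum ?S (tuples {1..c-2} k)"
    using Nsub_field_minus_family[OF _ points(2,3), of k b]
    unfolding D_def points(1) p_def q_def by simp
  have tuples: "tuples {1..c-2} k
      = {i. (\<forall>j. j \<notin> {1..c-2} \<longrightarrow> i j = 0) \<and> (\<Sum>j=1..c-2. i j) \<le> k}"
    unfolding tuples_def ..
  show ?thesis
    unfolding tuples[symmetric]
  proof (intro conjI impI)
    show "real (Nsub k b D) - (1 / real q) * real ((q - c) choose k)
        = (1 / real q) * (-1)^k * Rc p q c k - (-1)^k * sum ?S (tuples {1..c-2} k)"
      using count by linarith
  next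
    assume indep: "\<forall>l :: nat \<Rightarrow> nat. of_nat (l 0) * b + (\<Sum>j=2..c. of_nat (l j) * a j) = 0
        \<longrightarrow> (\<forall>j\<in>insert 0 {2..c}. (of_nat (l j) :: 'a) = 0)"
    have "?S i = 0" for i
      using shifted_sum_not_in_prime_field[OF c3 a2 indep] unfolding Sfun_def by simp
    then show "real (Nsub k b D) = (1 / real q) * real ((q - c) choose k) + (1 / real q) * (-1)^k * Rc p q c k"
      using count by simp
  qed
qed

end
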